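(* A $\star$-metric space $(X,d^\star)$ is complete if and only if every family $\{F_s\}_{s\in S}$ of closed subsets of $X$ which has the finite intersection property and which, for every $\epsilon>0$, contains a set of diameter less than $\epsilon$, has nonempty intersection $\bigcap_{s\in S}F_s\neq\emptyset$.
   Context: A $t$-definer is a function $\star:[0,\infty)\times[0,\infty)\to[0,\infty)$ such that for all $a,b,c\ge 0$: $a\star b=b\star a$; $a\star(b\star c)=(a\star b)\star c$; if $a\le b$ then $a\star c\le b\star c$; $a\star 0=a$; and $\star$ is continuous in its first variable with respect to the Euclidean topology. Given a nonempty set $X$ and a $t$-definer $\star$, a $\star$-metric on $X$ is a function $d^\star:X\times X\to[0,\infty)$ such that for all $x,y,z\in X$: $d^\star(x,y)=0$ iff $x=y$; $d^\star(x,y)=d^\star(y,x)$; and $d^\star(x,y)\le d^\star(x,z)\star d^\star(z,y)$. Closedness refers to the topology consisting of all $U\subseteq X$ such that for each $a\in U$ there is $r>0$ with $\{x: d^\star(a,x)<r\}\subseteq U$. The diameter of $A\subseteq X$ is $\delta(A)=\sup_{x,y\in A}d^\star(x,y)$, with $\delta(\emptyset)=0$. A family has the finite intersection property if every finite subfamily has nonempty intersection. A sequence $\{x_n\}$ is Cauchy if for every $\epsilon>0$ there is $k$ with $d^\star(x_n,x_m)<\epsilon$ for all $m,n\ge k$; it converges to $x$ if for every $\epsilon>0$ there is $k$ with $d^\star(x,x_n)<\epsilon$ for $n\ge k$. $(X,d^\star)$ is complete if every Cauchy sequence converges to a point of $X$. *)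

theory Defs
  imports "HOL-Analysis.Analysis"
begin

definition t_definer :: "(real \<Rightarrow> real \<Rightarrow> real) \<Rightarrow> bool" where
  "t_definer st \<longleftrightarrow>
     (\<forall>a\<ge>0. \<forall>b\<ge>0. st a b \<ge> 0) \<and>
     (\<forall>a\<ge>0. \<forall>b\<ge>0. st a b = st b a) \<and>
     (\<forall>a\<ge>0. \<forall>b\<ge>0. \<forall>c\<ge>0. st a (st b c) = st (st a b) c) \<and>
     (\<forall>a\<ge>0. \<forall>b\<ge>0. \<forall>c\<ge>0. a \<le> b \<longrightarrow> st a c \<le> st b c) \<and>
     (\<forall>a\<ge>0. st a 0 = a) \<and>
     (\<forall>b\<ge>0. continuous_on {0..} (\<lambda>a. st a b))"

definition star_metric :: "(real \<Rightarrow> real \<Rightarrow> real) \<Rightarrow> 'a set \<Rightarrow> ('a \<Rightarrow> 'a \<Rightarrow> real) \<Rightarrow> bool" where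
  "star_metric st X d \<longleftrightarrow>
     (\<forall>x\<in>X. \<forall>y\<in>X. d x y \<ge> 0) \<and>
     (\<forall>x\<in>X. \<forall>y\<in>X. d x y = 0 \<longleftrightarrow> x = y) \<and>
     (\<forall>x\<in>X. \<forall>y\<in>X. d x y = d y x) \<and>
     (\<forall>x\<in>X. \<forall>y\<in>X. \<forall>z\<in>X. d x y \<le> st (d x z) (d z y))"

definition sopen :: "'a set \<Rightarrow> ('a \<Rightarrow> 'a \<Rightarrow> real) \<Rightarrow> 'a set \<Rightarrow> bool" where
  "sopen X d U \<longleftrightarrow> U \<subseteq> X \<and> (\<forall>a\<in>U. \<exists>r>0. {x\<in>X. d a x < r} \<subseteq> U)"

definition sclosed :: "'a set \<Rightarrow> ('a \<Rightarrow> 'a \<Rightarrow> real) \<Rightarrow> 'a set \<Rightarrow> bool" where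
  "sclosed X d F \<longleftrightarrow> F \<subseteq> X \<and> sopen X d (X - F)"

definition sdiam :: "('a \<Rightarrow> 'a \<Rightarrow> real) \<Rightarrow> 'a set \<Rightarrow> ereal" where
  "sdiam d A = (if A = {} then 0 else (SUP p\<in>A \<times> A. ereal (d (fst p) (snd p))))"

definition scauchy :: "'a set \<Rightarrow> ('a \<Rightarrow> 'a \<Rightarrow> real) \<Rightarrow> (nat \<Rightarrow> 'a) \<Rightarrow> bool" where
  "scauchy X d x \<longleftrightarrow> (\<forall>e>0. \<exists>k. \<forall>m\<ge>k. \<forall>n\<ge>k. d (x n) (x m) < e)"

definition sconverges :: "('a \<Rightarrow> 'a \<Rightarrow> real) \<Rightarrow> (nat \<Rightarrow> 'a) \<Rightarrow> 'a \<Rightarrow> bool" where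
  "sconverges d x l \<longleftrightarrow> (\<forall>e>0. \<exists>k. \<forall>n\<ge>k. d l (x n) < e)"

definition scomplete :: "'a set \<Rightarrow> ('a \<Rightarrow> 'a \<Rightarrow> real) \<Rightarrow> bool" where
  "scomplete X d \<longleftrightarrow>
     (\<forall>x. (\<forall>n. x n \<in> X) \<longrightarrow> scauchy X d x \<longrightarrow> (\<exists>l\<in>X. sconverges d x l))"

definition finite_intersection_property :: "'a set set \<Rightarrow> bool" where
  "finite_intersection_property \<F> \<longleftrightarrow>
     (\<forall>\<G>. \<G> \<subseteq> \<F> \<longrightarrow> finite \<G> \<longrightarrow> \<G> \<noteq> {} \<longrightarrow> \<Inter>\<G> \<noteq> {})"

end

theory Submission
  imports Defs
begin

text \<open>
  Continuity of the t-definer at 0 makes it behave like a genuine triangle inequality in the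
  small: for every \<open>e > 0\<close> there is \<open>\<delta> > 0\<close> with \<open>d x y < e\<close> whenever \<open>d x z < \<delta>\<close> and \<open>d z y < \<delta>\<close>.
  With this the classical Cantor argument goes through. If \<open>X\<close> is complete, choosing \<open>F\<^sub>n\<close> of
  diameter below \<open>1/(n+1)\<close> and \<open>x\<^sub>n \<in> F\<^sub>0 \<inter> \<dots> \<inter> F\<^sub>n\<close> gives a Cauchy sequence, and its limit
  adheres to, hence lies in, every closed member of the family. Conversely, for a Cauchy
  sequence the closures of its tails form a decreasing family of closed sets of vanishing
  diameter; a common point is a limit of the sequence.
\<close>

lemma t_definer_small:
  assumes "t_definer st" and "e > 0"
  obtains \<delta> where "\<delta> > 0" and "\<And>a b. 0 \<le> a \<Longrightarrow> a \<le> \<delta> \<Longrightarrow> 0 \<le> b \<Longrightarrow> b \<le> \<delta> \<Longrightarrow> st a b < e"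
proof -
  define \<eta> where "\<eta> = e / 2"
  have \<eta>: "0 < \<eta>" "\<eta> < e" using \<open>e > 0\<close> by (auto simp: \<eta>_def)
  have comm: "\<And>a b. 0 \<le> a \<Longrightarrow> 0 \<le> b \<Longrightarrow> st a b = st b a"
    and mono: "\<And>a b c. 0 \<le> a \<Longrightarrow> 0 \<le> b \<Longrightarrow> 0 \<le> c \<Longrightarrow> a \<le> b \<Longrightarrow> st a c \<le> st b c"
    and unit: "\<And>a. 0 \<le> a \<Longrightarrow> st a 0 = a"
    and cont: "continuous_on {0..} (\<lambda>a. st a \<eta>)"
    using assms(1) \<eta> unfolding t_definer_def by auto
  have "st 0 \<eta> = \<eta>" using comm[of 0 \<eta>] unit[of \<eta>] \<eta> by simp
  with cont \<eta> obtain r where r: "r > 0" "\<And>a. 0 \<le> a \<Longrightarrow> \<bar>a\<bar> < r \<Longrightarrow> \<bar>st a \<eta> - \<eta>\<bar> < e - \<eta>"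
    unfolding continuous_on_iff dist_real_def
    by (metis atLeast_iff diff_gt_0_iff_gt diff_zero order_refl)
  define \<delta> where "\<delta> = min (r / 2) \<eta>"
  have "\<delta> > 0" using r \<eta> by (simp add: \<delta>_def)
  have "st \<delta> \<eta> < e" using r(2)[of \<delta>] \<open>\<delta> > 0\<close> r(1) by (simp add: \<delta>_def abs_less_iff)
  moreover have "st a b \<le> st \<delta> \<eta>" if "0 \<le> a" "a \<le> \<delta>" "0 \<le> b" "b \<le> \<delta>" for a b
  proof -
    have "st a b \<le> st \<delta> b" using mono that by auto
    also have "\<dots> = st b \<delta>" using comm that by auto
    also have "\<dots> \<le> st \<eta> \<delta>" using mono that \<eta> by (auto simp: \<delta>_def)
    also have "\<dots> = st \<delta> \<eta>" using comm that \<eta> by auto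
    finally show ?thesis .
  qed
  ultimately show ?thesis using that \<open>\<delta> > 0\<close> by fastforce
qed

lemma sdiam_less_imp_less:
  assumes "x \<in> A" "y \<in> A" "sdiam d A < ereal e"
  shows "d x y < e"
proof -
  have "ereal (d x y) \<le> sdiam d A"
    using assms by (auto simp: sdiam_def intro!: SUP_upper2[of "(x, y)"])
  also note assms(3)
  finally show ?thesis by simp
qed

lemma sdiam_le:
  assumes "\<And>x y. x \<in> A \<Longrightarrow> y \<in> A \<Longrightarrow> d x y \<le> c" "c \<ge> 0"
  shows "sdiam d A \<le> ereal c"
  unfolding sdiam_def using assms by (auto intro!: SUP_least)

lemma finite_intersection_property_decseq:
  assumes "decseq F" "\<And>n. F n \<noteq> {}"
  shows "finite_intersection_property (range F)"
  unfolding finite_intersection_property_def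
proof (intro allI impI)
  fix \<G> assume "\<G> \<subseteq> range F" "finite \<G>"
  from finite_subset_image[OF \<open>finite \<G>\<close> this(1)]
  obtain N where N: "finite N" "\<G> = F ` N" by auto
  have "F (Max N) \<subseteq> F n" if "n \<in> N" for n
    using assms(1) Max_ge[OF N(1) that] by (simp add: decseq_def)
  then have "F (Max N) \<subseteq> \<Inter>\<G>" using N(2) by blast
  then show "\<Inter>\<G> \<noteq> {}" using assms(2) by blast
qed

lemma finite_intersection_property_obtain_seq:
  fixes G :: "nat \<Rightarrow> 'a set"
  assumes "finite_intersection_property \<F>" "\<And>n. G n \<in> \<F>"
  obtains x where "\<And>k n. k \<le> n \<Longrightarrow> x n \<in> G k"
proof -
  have "\<forall>n. \<exists>y. y \<in> \<Inter>(G ` {..n})"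
  proof
    fix n
    have "G ` {..n} \<subseteq> \<F>" using assms(2) by blast
    moreover have "finite (G ` {..n})" "G ` {..n} \<noteq> {}" by simp_all
    ultimately show "\<exists>y. y \<in> \<Inter>(G ` {..n})"
      using assms(1) unfolding finite_intersection_property_def by blast
  qed
  then obtain x where "\<And>n. x n \<in> \<Inter>(G ` {..n})" by (auto simp only: choice_iff)
  then show ?thesis by (intro that) auto
qed

lemma scauchy_if_nested_sdiam:
  assumes "\<And>k n. k \<le> n \<Longrightarrow> x n \<in> G k"
    and "\<And>n. sdiam d (G n) < ereal (inverse (real (Suc n)))"
  shows "scauchy X d x"
  unfolding scauchy_def
proof (intro allI impI)
  fix e :: real assume "e > 0"
  then obtain k where k: "inverse (real (Suc k)) < e" using reals_Archimedean by blast
  have "d (x n) (x m) < e" if "k \<le> m" "k \<le> n" for m n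
    using sdiam_less_imp_less[OF assms(1)[OF that(2)] assms(1)[OF that(1)] assms(2)] k by linarith
  then show "\<exists>k. \<forall>m\<ge>k. \<forall>n\<ge>k. d (x n) (x m) < e" by blast
qed

definition sclosure :: "'a set \<Rightarrow> ('a \<Rightarrow> 'a \<Rightarrow> real) \<Rightarrow> 'a set \<Rightarrow> 'a set" where
  "sclosure X d A = {y \<in> X. \<forall>r>0. \<exists>a\<in>A. d y a < r}"

lemma sclosure_mono: "A \<subseteq> B \<Longrightarrow> sclosure X d A \<subseteq> sclosure X d B"
  unfolding sclosure_def by blast

lemma sclosed_contains_adherent:
  assumes "sclosed X d F" "y \<in> X" "\<And>r. r > 0 \<Longrightarrow> \<exists>a\<in>F. d y a < r"
  shows "y \<in> F"
  using assms unfolding sclosed_def sopen_def by blast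

locale star_metric_space =
  fixes st :: "real \<Rightarrow> real \<Rightarrow> real" and X :: "'a set" and d :: "'a \<Rightarrow> 'a \<Rightarrow> real"
  assumes t_definer: "t_definer st" and star_metric: "star_metric st X d"
begin

lemma d_nonneg: "x \<in> X \<Longrightarrow> y \<in> X \<Longrightarrow> d x y \<ge> 0"
  and d_self: "x \<in> X \<Longrightarrow> d x x = 0"
  and d_sym: "x \<in> X \<Longrightarrow> y \<in> X \<Longrightarrow> d x y = d y x"
  and d_triangle: "x \<in> X \<Longrightarrow> y \<in> X \<Longrightarrow> z \<in> X \<Longrightarrow> d x y \<le> st (d x z) (d z y)"
  using star_metric unfolding star_metric_def by auto

lemma small_triangle:
  assumes "e > 0"
  obtains \<delta> where "\<delta> > 0"
    and "\<And>x y z. x \<in> X \<Longrightarrow> y \<in> X \<Longrightarrow> z \<in> X \<Longrightarrow> d x z < \<delta> \<Longrightarrow> d z y < \<delta> \<Longrightarrow> d x y < e"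
proof -
  obtain \<delta> where \<delta>: "\<delta> > 0" "\<And>a b. 0 \<le> a \<Longrightarrow> a \<le> \<delta> \<Longrightarrow> 0 \<le> b \<Longrightarrow> b \<le> \<delta> \<Longrightarrow> st a b < e"
    using t_definer_small[OF t_definer assms] by blast
  have "d x y < e" if "x \<in> X" "y \<in> X" "z \<in> X" "d x z < \<delta>" "d z y < \<delta>" for x y z
    using d_triangle[of x y z] \<delta>(2)[of "d x z" "d z y"] d_nonneg that by fastforce
  with \<delta>(1) show ?thesis using that by blast
qed

lemma sclosure_subset: "sclosure X d A \<subseteq> X"
  unfolding sclosure_def by blast

lemma subset_sclosure: "A \<subseteq> X \<Longrightarrow> A \<subseteq> sclosure X d A"
  unfolding sclosure_def using d_self by force

lemma sclosed_sclosure: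
  assumes "A \<subseteq> X"
  shows "sclosed X d (sclosure X d A)"
  unfolding sclosed_def sopen_def
proof (intro conjI ballI sclosure_subset)
  show "X - sclosure X d A \<subseteq> X" by blast
  fix y assume y: "y \<in> X - sclosure X d A"
  then obtain r where r: "r > 0" "\<And>a. a \<in> A \<Longrightarrow> \<not> d y a < r"
    unfolding sclosure_def by auto
  obtain \<delta> where \<delta>: "\<delta> > 0"
    "\<And>x y z. x \<in> X \<Longrightarrow> y \<in> X \<Longrightarrow> z \<in> X \<Longrightarrow> d x z < \<delta> \<Longrightarrow> d z y < \<delta> \<Longrightarrow> d x y < r"
    using small_triangle[OF r(1)] by blast
  have "z \<notin> sclosure X d A" if "z \<in> X" "d y z < \<delta>" for z
  proof
    assume "z \<in> sclosure X d A"
    then obtain a where "a \<in> A" "d z a < \<delta>" using \<open>\<delta> > 0\<close> unfolding sclosure_def by blast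
    then show False using \<delta>(2)[of y a z] r(2) y that assms by blast
  qed
  then show "\<exists>r>0. {z \<in> X. d y z < r} \<subseteq> X - sclosure X d A" using \<open>\<delta> > 0\<close> by blast
qed

lemma sdiam_sclosure_small:
  assumes "e > 0"
  obtains \<delta> where "\<delta> > 0"
    and "\<And>A. A \<subseteq> X \<Longrightarrow> (\<And>a b. a \<in> A \<Longrightarrow> b \<in> A \<Longrightarrow> d a b < \<delta>) \<Longrightarrow> sdiam d (sclosure X d A) < ereal e"
proof -
  obtain \<delta>\<^sub>1 where \<delta>\<^sub>1: "\<delta>\<^sub>1 > 0"
    "\<And>x y z. x \<in> X \<Longrightarrow> y \<in> X \<Longrightarrow> z \<in> X \<Longrightarrow> d x z < \<delta>\<^sub>1 \<Longrightarrow> d z y < \<delta>\<^sub>1 \<Longrightarrow> d x y < e / 2"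
    using small_triangle[of "e / 2"] assms by auto
  obtain \<delta>\<^sub>2 where \<delta>\<^sub>2: "\<delta>\<^sub>2 > 0"
    "\<And>x y z. x \<in> X \<Longrightarrow> y \<in> X \<Longrightarrow> z \<in> X \<Longrightarrow> d x z < \<delta>\<^sub>2 \<Longrightarrow> d z y < \<delta>\<^sub>2 \<Longrightarrow> d x y < \<delta>\<^sub>1"
    using small_triangle[OF \<delta>\<^sub>1(1)] by blast
  have "sdiam d (sclosure X d A) < ereal e"
    if A: "A \<subseteq> X" "\<And>a b. a \<in> A \<Longrightarrow> b \<in> A \<Longrightarrow> d a b < \<delta>\<^sub>2" for A
  proof -
    have "d y y' \<le> e / 2" if y: "y \<in> sclosure X d A" "y' \<in> sclosure X d A" for y y'
    proof -
      obtain a where a: "a \<in> A" "d y a < \<delta>\<^sub>1" using y(1) \<delta>\<^sub>1(1) unfolding sclosure_def by blast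
      obtain a' where a': "a' \<in> A" "d y' a' < \<delta>\<^sub>2" using y(2) \<delta>\<^sub>2(1) unfolding sclosure_def by blast
      have "y \<in> X" "y' \<in> X" "a \<in> X" "a' \<in> X" using y a a' A(1) sclosure_subset by auto
      then have "d a y' < \<delta>\<^sub>1" using \<delta>\<^sub>2(2)[of a y' a'] A(2) a a' d_sym by auto
      then show ?thesis
        using \<delta>\<^sub>1(2)[of y y' a] a \<open>y \<in> X\<close> \<open>y' \<in> X\<close> \<open>a \<in> X\<close> by fastforce
    qed
    then have "sdiam d (sclosure X d A) \<le> ereal (e / 2)" using assms by (intro sdiam_le) auto
    also have "\<dots> < ereal e" using assms by simp
    finally show ?thesis .
  qed
  with \<delta>\<^sub>2(1) show ?thesis using that by blast
qed

lemma scomplete_imp_Inter_nonempty: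
  assumes "scomplete X d" and closed: "\<forall>F\<in>\<F>. sclosed X d F"
    and fip: "finite_intersection_property \<F>" and small: "\<forall>e>0. \<exists>F\<in>\<F>. sdiam d F < ereal e"
  shows "\<Inter>\<F> \<noteq> {}"
proof -
  have "\<forall>n. \<exists>F. F \<in> \<F> \<and> sdiam d F < ereal (inverse (real (Suc n)))"
  proof
    fix n :: nat
    have "inverse (real (Suc n)) > 0" by simp
    then show "\<exists>F. F \<in> \<F> \<and> sdiam d F < ereal (inverse (real (Suc n)))" using small by blast
  qed
  then obtain G where G: "\<And>n. G n \<in> \<F>" "\<And>n. sdiam d (G n) < ereal (inverse (real (Suc n)))"
    by (auto simp only: choice_iff)
  obtain x where x: "\<And>k n. k \<le> n \<Longrightarrow> x n \<in> G k"
    using finite_intersection_property_obtain_seq[of \<F> G, OF fip G(1)] by blast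
  have GX: "G n \<subseteq> X" for n using G(1) closed unfolding sclosed_def by blast
  have xX: "x n \<in> X" for n using x GX by blast
  have "scauchy X d x" using x G(2) by (rule scauchy_if_nested_sdiam)
  then obtain l where l: "l \<in> X" "sconverges d x l"
    using \<open>scomplete X d\<close> xX unfolding scomplete_def by blast
  have "l \<in> F" if F: "F \<in> \<F>" for F
  proof (rule sclosed_contains_adherent[OF bspec[OF closed F] l(1)])
    fix r :: real assume "r > 0"
    then obtain \<delta> where "\<delta> > 0" and \<delta>:
      "\<And>x y z. x \<in> X \<Longrightarrow> y \<in> X \<Longrightarrow> z \<in> X \<Longrightarrow> d x z < \<delta> \<Longrightarrow> d z y < \<delta> \<Longrightarrow> d x y < r"
      using small_triangle[OF \<open>r > 0\<close>] by blast
    obtain k where k: "inverse (real (Suc k)) < \<delta>" using reals_Archimedean \<open>\<delta> > 0\<close> by blast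
    obtain k' where k': "\<forall>n\<ge>k'. d l (x n) < \<delta>"
      using l(2) \<open>\<delta> > 0\<close> unfolding sconverges_def by blast
    define n where "n = max k k'"
    have "{G k, F} \<subseteq> \<F>" "finite {G k, F}" "{G k, F} \<noteq> {}" using G(1) F by auto
    then have "\<Inter>{G k, F} \<noteq> {}"
      using fip unfolding finite_intersection_property_def by blast
    then obtain y where y: "y \<in> G k" "y \<in> F" by auto
    have "d (x n) y < inverse (real (Suc k))"
      using sdiam_less_imp_less[OF x y(1) G(2)] by (simp add: n_def)
    with k have "d (x n) y < \<delta>" by linarith
    moreover have "d l (x n) < \<delta>" using k' by (simp add: n_def)
    ultimately have "d l y < r" using \<delta> l(1) xX GX y(1) by blast
    with y(2) show "\<exists>y\<in>F. d l y < r" by blast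
  qed
  then show ?thesis by blast
qed

lemma sdiam_tail_sclosure_small:
  assumes "\<forall>n. x n \<in> X" "scauchy X d x" "e > 0"
  obtains N where "sdiam d (sclosure X d (x ` {N..})) < ereal e"
proof -
  obtain \<delta> where "\<delta> > 0" and \<delta>: "\<And>A. A \<subseteq> X \<Longrightarrow>
      (\<And>a b. a \<in> A \<Longrightarrow> b \<in> A \<Longrightarrow> d a b < \<delta>) \<Longrightarrow> sdiam d (sclosure X d A) < ereal e"
    using sdiam_sclosure_small[OF \<open>e > 0\<close>] by blast
  obtain N where "\<forall>m\<ge>N. \<forall>n\<ge>N. d (x n) (x m) < \<delta>"
    using assms(2) \<open>\<delta> > 0\<close> unfolding scauchy_def by blast
  then have "sdiam d (sclosure X d (x ` {N..})) < ereal e" using assms(1) by (intro \<delta>) auto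
  then show ?thesis by (rule that)
qed

lemma sconverges_if_in_tail_sclosures:
  assumes "\<forall>n. x n \<in> X" "scauchy X d x" "l \<in> X" "\<And>n. l \<in> sclosure X d (x ` {n..})"
  shows "sconverges d x l"
  unfolding sconverges_def
proof (intro allI impI)
  fix e :: real assume "e > 0"
  then obtain \<delta> where "\<delta> > 0" and \<delta>:
    "\<And>x y z. x \<in> X \<Longrightarrow> y \<in> X \<Longrightarrow> z \<in> X \<Longrightarrow> d x z < \<delta> \<Longrightarrow> d z y < \<delta> \<Longrightarrow> d x y < e"
    using small_triangle[OF \<open>e > 0\<close>] by blast
  obtain N where N: "\<forall>m\<ge>N. \<forall>n\<ge>N. d (x n) (x m) < \<delta>"
    using assms(2) \<open>\<delta> > 0\<close> unfolding scauchy_def by blast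
  obtain m where m: "m \<ge> N" "d l (x m) < \<delta>"
    using assms(4)[of N] \<open>\<delta> > 0\<close> unfolding sclosure_def by auto
  have "d l (x n) < e" if "n \<ge> N" for n
    using \<delta>[of l "x n" "x m"] assms(1,3) m N that by blast
  then show "\<exists>k. \<forall>n\<ge>k. d l (x n) < e" by blast
qed

lemma scomplete_if_Inter_nonempty:
  assumes nonempty: "\<forall>\<F>. (\<forall>F\<in>\<F>. sclosed X d F) \<longrightarrow> finite_intersection_property \<F> \<longrightarrow>
      (\<forall>e>0. \<exists>F\<in>\<F>. sdiam d F < ereal e) \<longrightarrow> \<Inter>\<F> \<noteq> {}"
  shows "scomplete X d"
  unfolding scomplete_def
proof (intro allI impI)
  fix x :: "nat \<Rightarrow> 'a" assume xX: "\<forall>n. x n \<in> X" and cauchy: "scauchy X d x"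
  define F where "F n = sclosure X d (x ` {n..})" for n
  have tail_X: "x ` {n..} \<subseteq> X" for n using xX by blast
  have "decseq F"
    unfolding F_def by (intro decseq_SucI sclosure_mono) auto
  moreover have "F n \<noteq> {}" for n
    using subset_sclosure[OF tail_X] unfolding F_def by blast
  ultimately have "finite_intersection_property (range F)"
    by (rule finite_intersection_property_decseq)
  moreover have "\<forall>e>0. \<exists>A\<in>range F. sdiam d A < ereal e"
    using sdiam_tail_sclosure_small[OF xX cauchy] unfolding F_def by (metis rangeI)
  moreover have "sclosed X d (F n)" for n
    unfolding F_def using sclosed_sclosure[OF tail_X] .
  ultimately have "\<Inter>(range F) \<noteq> {}"
    using nonempty[rule_format, of "range F"] by blast
  then obtain l where l: "\<And>n. l \<in> F n" by blast
  have "l \<in> X" using l[of 0] sclosure_subset unfolding F_def by blast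
  with l have "sconverges d x l"
    unfolding F_def by (intro sconverges_if_in_tail_sclosures[OF xX cauchy])
  with \<open>l \<in> X\<close> show "\<exists>l\<in>X. sconverges d x l" by blast
qed

end

theorem theorem4p10:
  fixes st :: "real \<Rightarrow> real \<Rightarrow> real" and X :: "'a set" and d :: "'a \<Rightarrow> 'a \<Rightarrow> real"
  assumes "t_definer st" and "X \<noteq> {}" and "star_metric st X d"
  shows "scomplete X d \<longleftrightarrow>
    (\<forall>\<F> :: 'a set set.
        (\<forall>F\<in>\<F>. sclosed X d F) \<longrightarrow>
        finite_intersection_property \<F> \<longrightarrow>
        (\<forall>e>0. \<exists>F\<in>\<F>. sdiam d F < ereal e) \<longrightarrow>
        \<Inter>\<F> \<noteq> {})"
proof -
  interpret star_metric_space st X d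
    using assms(1,3) by unfold_locales
  show ?thesis
    by (meson scomplete_imp_Inter_nonempty scomplete_if_Inter_nonempty)
qed

end
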